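(* Let $\theta:(0,1)\to(0,\infty)$ be $C^1$, $X(r)=\int_{1/2}^r\theta(s)^{-1/2}ds$, $\mathcal F(r)=\frac12X(r)^2$, and let $\mathcal A(r_0,r_1)$ be the minimal action $$\mathcal A(r_0,r_1)=\inf\Big\{\int_0^1\Big(\frac{\dot r^2}{2\theta(r)}+\frac{\theta(r)}2\Big(\frac{d\mathcal F}{dr}(r)\Big)^2\Big)dt:\ r\in C^1([0,1];(0,1)),\ r(0)=r_0,\ r(1)=r_1\Big\}.$$ Define $D(r_0,r_1)=\mathcal A(r_0,r_1)-\frac12\mathcal A(r_0,r_0)-\frac12\mathcal A(r_1,r_1)$. Then for all $r_0,r_1\in(0,1)$, $$D(r_0,r_1)=\frac{1}{2\sinh1}\Big(\int_{r_0}^{r_1}\frac{ds}{\sqrt{\theta(s)}}\Big)^2.$$ *)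

theory Defs
  imports "HOL-Analysis.Analysis"
begin

definition oint :: "real \<Rightarrow> real \<Rightarrow> (real \<Rightarrow> real) \<Rightarrow> real" where
  "oint a b f = (if a \<le> b then integral {a..b} f else - integral {b..a} f)"

definition Xfun :: "(real \<Rightarrow> real) \<Rightarrow> real \<Rightarrow> real" where
  "Xfun \<theta> r = oint (1/2) r (\<lambda>s. 1 / sqrt (\<theta> s))"

definition Ffun :: "(real \<Rightarrow> real) \<Rightarrow> real \<Rightarrow> real" where
  "Ffun \<theta> r = (Xfun \<theta> r)^2 / 2"

definition admissible_path :: "(real \<Rightarrow> real) \<Rightarrow> (real \<Rightarrow> real) \<Rightarrow> bool" where
  "admissible_path r r' \<longleftrightarrow>
     (\<forall>t\<in>{0..1}. (r has_real_derivative r' t) (at t within {0..1})) \<and>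
     continuous_on {0..1} r' \<and> (\<forall>t\<in>{0..1}. r t \<in> {0<..<1})"

definition action :: "(real \<Rightarrow> real) \<Rightarrow> (real \<Rightarrow> real) \<Rightarrow> (real \<Rightarrow> real) \<Rightarrow> real" where
  "action \<theta> r r' = integral {0..1}
     (\<lambda>t. (r' t)^2 / (2 * \<theta> (r t)) + \<theta> (r t) / 2 * (deriv (Ffun \<theta>) (r t))^2)"

definition min_action :: "(real \<Rightarrow> real) \<Rightarrow> real \<Rightarrow> real \<Rightarrow> real" where
  "min_action \<theta> r0 r1 = Inf {action \<theta> r r' | r r'.
      admissible_path r r' \<and> r 0 = r0 \<and> r 1 = r1}"

definition Dfun :: "(real \<Rightarrow> real) \<Rightarrow> real \<Rightarrow> real \<Rightarrow> real" where
  "Dfun \<theta> r0 r1 = min_action \<theta> r0 r1 - min_action \<theta> r0 r0 / 2 - min_action \<theta> r1 r1 / 2"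

end

theory Submission
  imports Defs
begin

text \<open>
  In the coordinate x = X(r) the action of a path becomes the energy
  int_0^1 (x'^2 + x^2)/2 dt, because r'^2 / \<theta>(r) = x'^2 and \<theta>(r) F'(r)^2 = X(r)^2.
  The calibration Phi(t, x) = tanh t x^2/2 + b x / cosh t - b^2 tanh t / 2 solves the
  Hamilton-Jacobi equation Phi_t + (Phi_x)^2/2 = x^2/2, so along any path the derivative
  of Phi(t, x(t)) is the Lagrangian minus the square (x' - Phi_x)^2/2. Choosing b so that
  the extremal (x0 sinh (1 - t) + x1 sinh t) / sinh 1 follows Phi_x shows that the minimal
  energy is ((x0^2 + x1^2) cosh 1 - 2 x0 x1) / (2 sinh 1). It is attained in the original
  coordinate because the extremal stays between 0, x0 and x1, hence in the range of X, and
  can be pulled back through the inverse of X. The defect is then (x1 - x0)^2 / (2 sinh 1),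
  where x1 - x0 is the integral of 1 / sqrt \<theta> from r0 to r1.
\<close>

lemma oint_swap: "oint b a f = - oint a b f"
  by (cases a b rule: linorder_cases) (auto simp: oint_def)

lemma oint_add:
  fixes f :: "real \<Rightarrow> real"
  assumes S: "is_interval S" and f: "continuous_on S f" and abc: "a \<in> S" "b \<in> S" "c \<in> S"
  shows "oint a b f + oint b c f = oint a c f"
proof -
  have sorted: "oint u v f + oint v w f = oint u w f"
    if "u \<in> S" "w \<in> S" "u \<le> v" "v \<le> w" for u v w
  proof -
    have "{u..w} \<subseteq> S" using mem_is_interval_1_I[OF S that(1,2)] by auto
    then have "f integrable_on {u..w}"
      by (intro integrable_continuous_real continuous_on_subset[OF f])
    then show ?thesis
      using Henstock_Kurzweil_Integration.integral_combine[OF that(3,4)] that(3,4)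
      by (simp add: oint_def)
  qed
  show ?thesis
  proof (cases rule: le_cases3[of a b c])
    case 1 then show ?thesis using sorted[OF abc(1,3) 1] by simp
  next
    case 2 then show ?thesis using sorted[OF abc(2,3) 2] oint_swap[of a b f] by linarith
  next
    case 3 then show ?thesis using sorted[OF abc(1,2) 3] oint_swap[of c b f] by linarith
  next
    case 4 then show ?thesis
      using sorted[OF abc(3,1) 4] oint_swap[of a b f] oint_swap[of b c f] oint_swap[of a c f] by linarith
  next
    case 5 then show ?thesis using sorted[OF abc(2,1) 5] oint_swap[of a b f] oint_swap[of a c f] by linarith
  next
    case 6 then show ?thesis using sorted[OF abc(3,2) 6] oint_swap[of a c f] oint_swap[of b c f] by linarith
  qed
qed

lemma oint_has_real_derivative:
  fixes f :: "real \<Rightarrow> real"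
  assumes "open S" "is_interval S" "continuous_on S f" "a \<in> S" "x \<in> S"
  shows "((\<lambda>y. oint a y f) has_real_derivative f x) (at x)"
proof -
  obtain e where e: "e > 0" "cball x e \<subseteq> S"
    using assms(1,5) open_contains_cball by blast
  define u v where "u = x - e" and "v = x + e"
  have uv: "{u..v} \<subseteq> S" "u \<in> S"
    using e by (auto simp: u_def v_def cball_eq_atLeastAtMost)
  have "((\<lambda>y. integral {u..y} f) has_vector_derivative f x) (at x within {u..v})"
    using integral_has_vector_derivative[OF continuous_on_subset[OF assms(3) uv(1)]] e
    by (auto simp: u_def v_def)
  moreover have "at x within {u..v} = at x"
    using e by (intro at_within_interior) (auto simp: u_def v_def)
  ultimately have "((\<lambda>y. oint a u f + integral {u..y} f) has_real_derivative f x) (at x)"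
    by (auto simp: has_real_derivative_iff_has_vector_derivative intro!: derivative_eq_intros)
  then show ?thesis
  proof (rule has_field_derivative_transform_within_open[where S = "{u<..<v}"])
    fix y assume y: "y \<in> {u<..<v}"
    then have "y \<in> S" using uv by auto
    then show "oint a u f + integral {u..y} f = oint a y f"
      using oint_add[OF assms(2,3,4) uv(2), of y] y by (simp add: oint_def)
  qed (use e in \<open>auto simp: u_def v_def\<close>)
qed

lemma continuous_on_inverse_sqrt:
  assumes "continuous_on S \<theta>" "\<forall>s\<in>S. \<theta> s > 0"
  shows "continuous_on S (\<lambda>s. 1 / sqrt (\<theta> s))"
  using assms by (intro continuous_intros) auto

lemma Xfun_has_real_derivative:
  assumes "continuous_on {0<..<1} \<theta>" "\<forall>s\<in>{0<..<1}. \<theta> s > 0" "x \<in> {0<..<1}"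
  shows "(Xfun \<theta> has_real_derivative 1 / sqrt (\<theta> x)) (at x)"
  unfolding Xfun_def[abs_def]
  by (rule oint_has_real_derivative[OF _ _ continuous_on_inverse_sqrt[OF assms(1,2)]])
    (use assms(3) is_interval_oo in auto)

lemma Xfun_diff:
  assumes "continuous_on {0<..<1} \<theta>" "\<forall>s\<in>{0<..<1}. \<theta> s > 0" "a \<in> {0<..<1}" "b \<in> {0<..<1}"
  shows "Xfun \<theta> b - Xfun \<theta> a = oint a b (\<lambda>s. 1 / sqrt (\<theta> s))"
  using oint_add[OF is_interval_oo continuous_on_inverse_sqrt[OF assms(1,2)], of "1/2" a b] assms(3,4)
  unfolding Xfun_def by auto

lemma Xfun_strict_mono:
  assumes "continuous_on {0<..<1} \<theta>" "\<forall>s\<in>{0<..<1}. \<theta> s > 0"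
  shows "strict_mono_on {0<..<1} (Xfun \<theta>)"
proof (rule strict_mono_onI)
  fix a b :: real assume ab: "a \<in> {0<..<1}" "b \<in> {0<..<1}" "a < b"
  show "Xfun \<theta> a < Xfun \<theta> b"
  proof (rule DERIV_pos_imp_increasing[OF ab(3)])
    fix x assume "a \<le> x" "x \<le> b"
    then have "x \<in> {0<..<1}" using ab by auto
    then show "\<exists>y. DERIV (Xfun \<theta>) x :> y \<and> y > 0"
      using Xfun_has_real_derivative[OF assms] assms(2) by (intro exI conjI) auto
  qed
qed

lemma is_interval_Xfun_image:
  assumes "continuous_on {0<..<1} \<theta>" "\<forall>s\<in>{0<..<1}. \<theta> s > 0"
  shows "is_interval (Xfun \<theta> ` {0<..<1})"
proof -
  have "continuous_on {0<..<1} (Xfun \<theta>)"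
    using Xfun_has_real_derivative[OF assms]
    by (intro continuous_at_imp_continuous_on ballI DERIV_isCont) blast
  then have "connected (Xfun \<theta> ` {0<..<1})"
    by (rule connected_continuous_image) (rule connected_Ioo)
  then show ?thesis
    by (simp only: is_interval_connected_1)
qed

lemma deriv_Ffun:
  assumes "continuous_on {0<..<1} \<theta>" "\<forall>s\<in>{0<..<1}. \<theta> s > 0" "x \<in> {0<..<1}"
  shows "deriv (Ffun \<theta>) x = Xfun \<theta> x / sqrt (\<theta> x)"
proof (rule DERIV_imp_deriv)
  show "(Ffun \<theta> has_real_derivative Xfun \<theta> x / sqrt (\<theta> x)) (at x)"
    unfolding Ffun_def[abs_def] using Xfun_has_real_derivative[OF assms]
    by (auto intro!: derivative_eq_intros)
qed

definition C1_path :: "(real \<Rightarrow> real) \<Rightarrow> (real \<Rightarrow> real) \<Rightarrow> bool" where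
  "C1_path x x' \<longleftrightarrow>
     (\<forall>t\<in>{0..1}. (x has_real_derivative x' t) (at t within {0..1})) \<and> continuous_on {0..1} x'"

lemma admissible_path_iff:
  "admissible_path r r' \<longleftrightarrow> C1_path r r' \<and> (\<forall>t\<in>{0..1}. r t \<in> {0<..<1})"
  by (auto simp: admissible_path_def C1_path_def)

lemma C1_path_pullback:
  fixes X g :: "real \<Rightarrow> real"
  assumes S: "open S"
    and X: "\<And>s. s \<in> S \<Longrightarrow> (X has_real_derivative g s) (at s)" "inj_on X S"
    and g: "continuous_on S g" "\<And>s. s \<in> S \<Longrightarrow> g s \<noteq> 0"
    and x: "C1_path x x'" "x ` {0..1} \<subseteq> X ` S"
  obtains r where "C1_path r (\<lambda>t. x' t / g (r t))"
    "\<And>t. t \<in> {0..1} \<Longrightarrow> r t \<in> S \<and> X (r t) = x t"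
proof -
  define r where "r = (\<lambda>t. the_inv_into S X (x t))"
  have r: "r t \<in> S \<and> X (r t) = x t" if "t \<in> {0..1}" for t
  proof -
    have "x t \<in> X ` S" using x(2) that by blast
    then show ?thesis
      unfolding r_def using the_inv_into_into[OF X(2)] f_the_inv_into_f[OF X(2)] by blast
  qed
  have Xc: "continuous_on S X"
    using X(1) by (intro continuous_at_imp_continuous_on ballI DERIV_isCont) blast
  have inv: "DERIV (the_inv_into S X) (X s) :> inverse (g s)" if "s \<in> S" for s
    using has_derivative_inverse_strong[OF S that Xc the_inv_into_f_f[OF X(2)],
        of "(*) (g s)" "(*) (inverse (g s))"] X(1)[OF that] g(2)[OF that]
    by (auto simp: has_field_derivative_def fun_eq_iff)
  have x': "\<And>t. t \<in> {0..1} \<Longrightarrow> (x has_real_derivative x' t) (at t within {0..1})"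
    "continuous_on {0..1} x'"
    using x(1) by (auto simp: C1_path_def)
  have rd: "(r has_real_derivative x' t / g (r t)) (at t within {0..1})" if "t \<in> {0..1}" for t
  proof -
    have "DERIV (the_inv_into S X) (x t) :> inverse (g (r t))"
      using inv[of "r t"] r[OF that] by simp
    from DERIV_chain2[OF this x'(1)[OF that]] show ?thesis
      by (simp add: r_def divide_inverse mult.commute)
  qed
  have "continuous_on {0..1} (\<lambda>t. g (r t))"
    by (rule continuous_on_compose2[OF g(1) DERIV_continuous_on[OF rd]]) (use r in auto)
  then have "continuous_on {0..1} (\<lambda>t. x' t / g (r t))"
    using g(2) r by (intro continuous_intros x'(2)) auto
  then have "C1_path r (\<lambda>t. x' t / g (r t))"
    using rd by (simp add: C1_path_def)
  then show ?thesis using that r by blast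
qed

definition energy :: "(real \<Rightarrow> real) \<Rightarrow> (real \<Rightarrow> real) \<Rightarrow> real" where
  "energy x x' = integral {0..1} (\<lambda>t. ((x' t)^2 + (x t)^2) / 2)"

lemma energy_cong:
  assumes "\<And>t. t \<in> {0..1} \<Longrightarrow> x t = y t" "\<And>t. t \<in> {0..1} \<Longrightarrow> x' t = y' t"
  shows "energy x x' = energy y y'"
  unfolding energy_def using assms by (intro integral_cong) auto

definition calibration :: "real \<Rightarrow> real \<Rightarrow> real \<Rightarrow> real" where
  "calibration b t x = tanh t * x^2 / 2 + b * x / cosh t - b^2 * tanh t / 2"

lemma calibration_has_real_derivative:
  assumes "(x has_real_derivative x') (at t within S)"
  shows "((\<lambda>t. calibration b t (x t)) has_real_derivative
           ((x'^2 + (x t)^2) / 2 - (x' - tanh t * x t - b / cosh t)^2 / 2)) (at t within S)"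
proof -
  have C: "cosh t \<noteq> 0" using cosh_real_pos[of t] by linarith
  have P: "cosh t * cosh t - sinh t * sinh t = 1"
    using hyperbolic_pythagoras[of t] unfolding power2_eq_square .
  show ?thesis
    unfolding calibration_def
    apply (rule derivative_eq_intros assms refl | simp add: C)+
    apply (simp add: C tanh_def field_simps power2_eq_square)
    using P by algebra
qed

lemma energy_calibration:
  assumes "C1_path x x'"
  shows "energy x x' = calibration b 1 (x 1) - calibration b 0 (x 0)
           + integral {0..1} (\<lambda>t. (x' t - tanh t * x t - b / cosh t)^2 / 2)"
proof -
  define R where "R = (\<lambda>t. (x' t - tanh t * x t - b / cosh t)^2 / 2)"
  have xd: "\<And>t. t \<in> {0..1} \<Longrightarrow> (x has_real_derivative x' t) (at t within {0..1})"
    and x'c: "continuous_on {0..1} x'"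
    using assms by (auto simp: C1_path_def)
  have "continuous_on {0..1} x" by (rule DERIV_continuous_on[OF xd])
  then have "continuous_on {0..1} R"
    unfolding R_def tanh_def
    by (intro continuous_intros x'c) (auto simp: less_imp_neq[OF cosh_real_pos, symmetric])
  then have R: "(R has_integral integral {0..1} R) {0..1}"
    by (intro integrable_integral integrable_continuous_real)
  have "((\<lambda>t. ((x' t)^2 + (x t)^2) / 2 - R t) has_integral
          calibration b 1 (x 1) - calibration b 0 (x 0)) {0..1}"
    unfolding R_def
    by (rule fundamental_theorem_of_calculus)
      (auto simp: has_real_derivative_iff_has_vector_derivative[symmetric]
        intro!: calibration_has_real_derivative xd)
  from has_integral_add[OF this R]
  have "((\<lambda>t. ((x' t)^2 + (x t)^2) / 2) has_integral
          calibration b 1 (x 1) - calibration b 0 (x 0) + integral {0..1} R) {0..1}"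
    by simp
  then show ?thesis unfolding energy_def R_def by (rule integral_unique)
qed

lemma calibration_le_energy:
  assumes "C1_path x x'"
  shows "calibration b 1 (x 1) - calibration b 0 (x 0) \<le> energy x x'"
proof -
  let ?R = "\<lambda>t. (x' t - tanh t * x t - b / cosh t)^2 / 2"
  have "integral {0..1} ?R \<ge> 0"
    by (cases "?R integrable_on {0..1}") (simp_all add: integral_nonneg not_integrable_integral)
  then show ?thesis unfolding energy_calibration[OF assms, of b] by simp
qed

definition min_energy :: "real \<Rightarrow> real \<Rightarrow> real" where
  "min_energy x0 x1 = ((x0^2 + x1^2) * cosh 1 - 2 * x0 * x1) / (2 * sinh 1)"

lemma calibration_boundary_eq_min_energy:
  fixes x0 x1 :: real
  defines "b \<equiv> (x1 - x0 * cosh 1) / sinh 1"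
  shows "calibration b 1 x1 - calibration b 0 x0 = min_energy x0 x1"
proof -
  have S: "sinh (1::real) \<noteq> 0" and C: "cosh (1::real) \<noteq> 0" by simp_all
  have P: "cosh (1::real) * cosh 1 - sinh 1 * sinh 1 = 1"
    using hyperbolic_pythagoras[of "1::real"] unfolding power2_eq_square .
  show ?thesis
    unfolding calibration_def min_energy_def b_def
    apply (simp add: S C tanh_def field_simps power2_eq_square)
    using P by algebra
qed

lemma min_energy_le_energy:
  assumes "C1_path x x'"
  shows "min_energy (x 0) (x 1) \<le> energy x x'"
  using calibration_le_energy[OF assms, of "(x 1 - x 0 * cosh 1) / sinh 1"]
  by (simp add: calibration_boundary_eq_min_energy)

definition extremal :: "real \<Rightarrow> real \<Rightarrow> real \<Rightarrow> real" where
  "extremal x0 x1 t = (x0 * sinh (1 - t) + x1 * sinh t) / sinh 1"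

definition extremal_deriv :: "real \<Rightarrow> real \<Rightarrow> real \<Rightarrow> real" where
  "extremal_deriv x0 x1 t = (x1 * cosh t - x0 * cosh (1 - t)) / sinh 1"

lemma extremal_0 [simp]: "extremal x0 x1 0 = x0"
  and extremal_1 [simp]: "extremal x0 x1 1 = x1"
  by (simp_all add: extremal_def)

lemma C1_path_extremal: "C1_path (extremal x0 x1) (extremal_deriv x0 x1)"
  unfolding C1_path_def extremal_def[abs_def] extremal_deriv_def[abs_def]
  by (auto intro!: derivative_eq_intros continuous_intros)

lemma energy_extremal: "energy (extremal x0 x1) (extremal_deriv x0 x1) = min_energy x0 x1"
proof -
  define b where "b = (x1 - x0 * cosh 1) / sinh 1"
  have residual: "extremal_deriv x0 x1 t - tanh t * extremal x0 x1 t - b / cosh t = 0" for t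
  proof -
    have C: "cosh t \<noteq> 0" using cosh_real_pos[of t] by linarith
    have "cosh (1 - t) * cosh t + sinh (1 - t) * sinh t = cosh 1"
      using cosh_add[of "1 - t" t] by simp
    moreover have "cosh t * cosh t - sinh t * sinh t = 1"
      using hyperbolic_pythagoras[of t] unfolding power2_eq_square .
    moreover have "cosh t * (x1 * cosh t - x0 * cosh (1 - t))
        - sinh t * (x0 * sinh (1 - t) + x1 * sinh t)
        = x1 * (cosh t * cosh t - sinh t * sinh t)
          - x0 * (cosh (1 - t) * cosh t + sinh (1 - t) * sinh t)"
      by (simp add: algebra_simps)
    ultimately have key: "cosh t * (x1 * cosh t - x0 * cosh (1 - t))
        - sinh t * (x0 * sinh (1 - t) + x1 * sinh t) = x1 - x0 * cosh 1"
      by simp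
    show ?thesis
      unfolding extremal_def extremal_deriv_def b_def
      apply (simp add: C tanh_def field_simps)
      using key by algebra
  qed
  show ?thesis
    using energy_calibration[OF C1_path_extremal, where b = b]
      calibration_boundary_eq_min_energy[of x1 x0, folded b_def]
    by (simp add: residual)
qed

lemma sinh_add_sinh_le:
  fixes t :: real
  assumes "t \<in> {0..1}"
  shows "sinh (1 - t) + sinh t \<le> sinh 1"
proof -
  define u where "u = t - 1/2"
  have "\<bar>u\<bar> \<le> 1/2" using assms unfolding u_def atLeastAtMost_iff by arith
  then have "cosh u \<le> cosh (1/2)"
    using cosh_real_nonneg_le_iff[of "\<bar>u\<bar>" "1/2"] by simp
  then have "2 * sinh (1/2) * cosh u \<le> 2 * sinh (1/2) * cosh (1/2)"
    by (intro mult_left_mono) auto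
  moreover have "sinh (1 - t) + sinh t = 2 * sinh (1/2) * cosh u"
    using sinh_add[of "1/2" u] sinh_diff[of "1/2" u] by (simp add: u_def)
  moreover have "sinh (1::real) = 2 * sinh (1/2) * cosh (1/2)"
    using sinh_add[of "1/2::real" "1/2"] by simp
  ultimately show ?thesis by simp
qed

lemma extremal_mem_interval:
  fixes I :: "real set"
  assumes I: "is_interval I" "0 \<in> I" "x0 \<in> I" "x1 \<in> I" and t: "t \<in> {0..1}"
  shows "extremal x0 x1 t \<in> I"
proof -
  define w0 w1 where "w0 = sinh (1 - t) / sinh 1" and "w1 = sinh t / sinh 1"
  define m M where "m = min 0 (min x0 x1)" and "M = max 0 (max x0 x1)"
  have w: "w0 \<ge> 0" "w1 \<ge> 0" "w0 + w1 \<le> 1"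
    using t sinh_add_sinh_le[OF t] by (auto simp: w0_def w1_def divide_simps)
  have weights: "extremal x0 x1 t = w0 * x0 + w1 * x1"
    by (simp add: extremal_def w0_def w1_def add_divide_distrib ac_simps)
  have "m \<le> (w0 + w1) * m"
    using mult_right_mono_neg[OF w(3), of m] by (simp add: m_def)
  also have "\<dots> \<le> w0 * x0 + w1 * x1"
    using w by (simp add: m_def distrib_right add_mono mult_left_mono)
  finally have lower: "m \<le> extremal x0 x1 t" unfolding weights .
  have "w0 * x0 + w1 * x1 \<le> (w0 + w1) * M"
    using w by (simp add: M_def distrib_right add_mono mult_left_mono)
  also have "\<dots> \<le> M"
    using w by (simp add: M_def mult_left_le_one_le)
  finally have upper: "extremal x0 x1 t \<le> M" unfolding weights .
  have "m \<in> I" "M \<in> I" using I by (auto simp: m_def M_def min_def max_def)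
  then show ?thesis using mem_is_interval_1_I[OF I(1)] lower upper by blast
qed

lemma C1_path_Xfun_comp:
  assumes \<theta>: "continuous_on {0<..<1} \<theta>" "\<forall>s\<in>{0<..<1}. \<theta> s > 0" and r: "admissible_path r r'"
  shows "C1_path (\<lambda>t. Xfun \<theta> (r t)) (\<lambda>t. r' t / sqrt (\<theta> (r t)))"
proof -
  have rd: "\<And>t. t \<in> {0..1} \<Longrightarrow> (r has_real_derivative r' t) (at t within {0..1})"
    and r'c: "continuous_on {0..1} r'" and rin: "\<And>t. t \<in> {0..1} \<Longrightarrow> r t \<in> {0<..<1}"
    using r by (auto simp: admissible_path_def)
  have nz: "sqrt (\<theta> (r t)) \<noteq> 0" if "t \<in> {0..1}" for t
  proof -
    have "\<theta> (r t) > 0" using \<theta>(2) rin[OF that] by blast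
    then show ?thesis by simp
  qed
  have "continuous_on {0..1} (\<lambda>t. \<theta> (r t))"
    by (rule continuous_on_compose2[OF \<theta>(1) DERIV_continuous_on[OF rd]]) (use rin in auto)
  then have "continuous_on {0..1} (\<lambda>t. r' t / sqrt (\<theta> (r t)))"
    using nz by (intro continuous_intros r'c) auto
  moreover have "((\<lambda>t. Xfun \<theta> (r t)) has_real_derivative r' t / sqrt (\<theta> (r t))) (at t within {0..1})"
    if "t \<in> {0..1}" for t
    using DERIV_chain2[OF Xfun_has_real_derivative[OF \<theta> rin] rd] that by simp
  ultimately show ?thesis by (simp add: C1_path_def)
qed

lemma action_eq_energy:
  assumes \<theta>: "continuous_on {0<..<1} \<theta>" "\<forall>s\<in>{0<..<1}. \<theta> s > 0" and r: "admissible_path r r'"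
  shows "action \<theta> r r' = energy (\<lambda>t. Xfun \<theta> (r t)) (\<lambda>t. r' t / sqrt (\<theta> (r t)))"
  unfolding action_def energy_def
proof (rule integral_cong)
  fix t :: real assume "t \<in> {0..1}"
  then have rt: "r t \<in> {0<..<1}" using r by (simp add: admissible_path_def)
  then have "\<theta> (r t) > 0" using \<theta>(2) by blast
  then show "(r' t)^2 / (2 * \<theta> (r t)) + \<theta> (r t) / 2 * (deriv (Ffun \<theta>) (r t))^2
      = ((r' t / sqrt (\<theta> (r t)))^2 + (Xfun \<theta> (r t))^2) / 2"
    by (simp add: deriv_Ffun[OF \<theta> rt] power_divide)
qed

lemma min_energy_le_action:
  assumes "continuous_on {0<..<1} \<theta>" "\<forall>s\<in>{0<..<1}. \<theta> s > 0" "admissible_path r r'"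
  shows "min_energy (Xfun \<theta> (r 0)) (Xfun \<theta> (r 1)) \<le> action \<theta> r r'"
  using min_energy_le_energy[OF C1_path_Xfun_comp[OF assms]] action_eq_energy[OF assms] by simp

lemma admissible_path_with_min_energy:
  assumes \<theta>: "continuous_on {0<..<1} \<theta>" "\<forall>s\<in>{0<..<1}. \<theta> s > 0"
    and ab: "a \<in> {0<..<1}" "b \<in> {0<..<1}"
  obtains r r' where "admissible_path r r'" "r 0 = a" "r 1 = b"
    "action \<theta> r r' = min_energy (Xfun \<theta> a) (Xfun \<theta> b)"
proof -
  define x x' where "x = extremal (Xfun \<theta> a) (Xfun \<theta> b)"
    and "x' = extremal_deriv (Xfun \<theta> a) (Xfun \<theta> b)"
  have inj: "inj_on (Xfun \<theta>) {0<..<1}"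
    using Xfun_strict_mono[OF \<theta>] by (rule strict_mono_on_imp_inj_on)
  have "Xfun \<theta> (1/2) = 0" by (simp add: Xfun_def oint_def)
  then have "0 \<in> Xfun \<theta> ` {0<..<1}" by (intro image_eqI[where x = "1/2"]) auto
  then have "x t \<in> Xfun \<theta> ` {0<..<1}" if "t \<in> {0..1}" for t
    unfolding x_def using ab that
    by (intro extremal_mem_interval[OF is_interval_Xfun_image[OF \<theta>]]) simp_all
  then have img: "x ` {0..1} \<subseteq> Xfun \<theta> ` {0<..<1}" by blast
  have nz: "1 / sqrt (\<theta> s) \<noteq> 0" if "s \<in> {0<..<1}" for s
  proof -
    have "\<theta> s > 0" using \<theta>(2) that by blast
    then show ?thesis by simp
  qed
  have X': "\<And>s. s \<in> {0<..<1} \<Longrightarrow> (Xfun \<theta> has_real_derivative 1 / sqrt (\<theta> s)) (at s)"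
    using Xfun_has_real_derivative[OF \<theta>] .
  obtain r where C1: "C1_path r (\<lambda>t. x' t / (1 / sqrt (\<theta> (r t))))"
    and r: "\<And>t. t \<in> {0..1} \<Longrightarrow> r t \<in> {0<..<1} \<and> Xfun \<theta> (r t) = x t"
    using C1_path_pullback[OF open_greaterThanLessThan X' inj continuous_on_inverse_sqrt[OF \<theta>] nz
        C1_path_extremal img[unfolded x_def]]
    unfolding x_def x'_def by blast
  have adm: "admissible_path r (\<lambda>t. x' t * sqrt (\<theta> (r t)))"
    using C1 r by (simp add: admissible_path_iff)
  have r0: "r 0 = a" by (rule inj_onD[OF inj]) (use r[of 0] ab in \<open>auto simp: x_def\<close>)
  have r1: "r 1 = b" by (rule inj_onD[OF inj]) (use r[of 1] ab in \<open>auto simp: x_def\<close>)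
  have "action \<theta> r (\<lambda>t. x' t * sqrt (\<theta> (r t))) = energy x x'"
    unfolding action_eq_energy[OF \<theta> adm]
  proof (rule energy_cong)
    fix t :: real assume t: "t \<in> {0..1}"
    then have "\<theta> (r t) > 0" using r \<theta>(2) by blast
    then show "x' t * sqrt (\<theta> (r t)) / sqrt (\<theta> (r t)) = x' t" by simp
    show "Xfun \<theta> (r t) = x t" using r t by blast
  qed
  also have "\<dots> = min_energy (Xfun \<theta> a) (Xfun \<theta> b)"
    by (simp add: x_def x'_def energy_extremal)
  finally show ?thesis by (rule that[OF adm r0 r1])
qed

lemma min_action_eq_min_energy:
  assumes "continuous_on {0<..<1} \<theta>" "\<forall>s\<in>{0<..<1}. \<theta> s > 0"
    and "a \<in> {0<..<1}" "b \<in> {0<..<1}"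
  shows "min_action \<theta> a b = min_energy (Xfun \<theta> a) (Xfun \<theta> b)"
  unfolding min_action_def
proof (rule cInf_eq_minimum)
  obtain r r' where "admissible_path r r'" "r 0 = a" "r 1 = b"
    "action \<theta> r r' = min_energy (Xfun \<theta> a) (Xfun \<theta> b)"
    using admissible_path_with_min_energy[OF assms] .
  then show "min_energy (Xfun \<theta> a) (Xfun \<theta> b)
      \<in> {action \<theta> r r' |r r'. admissible_path r r' \<and> r 0 = a \<and> r 1 = b}"
    by force
next
  fix y assume "y \<in> {action \<theta> r r' |r r'. admissible_path r r' \<and> r 0 = a \<and> r 1 = b}"
  then show "min_energy (Xfun \<theta> a) (Xfun \<theta> b) \<le> y"
    using min_energy_le_action[OF assms(1,2)] by blast
qed

lemma min_energy_defect:
  "min_energy x0 x1 - min_energy x0 x0 / 2 - min_energy x1 x1 / 2 = 1 / (2 * sinh 1) * (x1 - x0)^2"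
  by (simp add: min_energy_def field_simps power2_eq_square)

theorem mainTheorem13:
  fixes \<theta> :: "real \<Rightarrow> real" and r0 r1 :: real
  assumes "\<theta> C1_differentiable_on {0<..<1}"
    and "\<forall>s\<in>{0<..<1}. \<theta> s > 0"
    and "r0 \<in> {0<..<1}" and "r1 \<in> {0<..<1}"
  shows "Dfun \<theta> r0 r1 = 1 / (2 * sinh (1::real)) * (oint r0 r1 (\<lambda>s. 1 / sqrt (\<theta> s)))^2"
proof -
  have \<theta>: "continuous_on {0<..<1} \<theta>"
    using assms(1) by (intro differentiable_imp_continuous_on C1_diff_imp_diff)
  note min_action = min_action_eq_min_energy[OF \<theta> assms(2)]
  show ?thesis
    unfolding Dfun_def min_action[OF assms(3,4)] min_action[OF assms(3,3)] min_action[OF assms(4,4)]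
      Xfun_diff[OF \<theta> assms(2-4), symmetric] min_energy_defect ..
qed

end
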